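(* Let $\{x_i\}_{i\in[N]}$ be the global solution of the delayed consensus system described in the context, let $\beta>0$ satisfy $2\beta e^{-2\tau}-4\tau-\beta\ge0$, and let \[ F(t):=d_x(t)+\beta\int_{\max\{0,t-2\tau\}}^t e^{-(t-s)}\int_s^t\max_{i\in[N]}|\dot x_i(r)|\,\mathrm dr\,\mathrm ds,\qquad t\ge0. \] Then for almost all $t>2\tau$, \[ \frac{\mathrm d}{\mathrm dt}F(t)\le 4\int_{t-\tau}^tF(s-\tau)\,\mathrm ds-(N-1)\underline a(t)F(t)+\beta(1-e^{-2\tau})F(t-\tau), \] where $\underline a(t):=\min_{i,j\in[N]}a_{ij}(t)$.
   Context: Let $N\ge2$, $d\ge1$ be integers, $[N]=\{1,\dots,N\}$, $0\le\sigma\le\tau$. Let $\psi:[0,\infty)\to[0,\infty)$ be continuous, nonincreasing, positive everywhere, with $\sup\psi\le1$. Given $x_i^0\in C([-\tau,0],\mathbb{R}^d)$, $\{x_i\}$ is the global solution (continuous on $[-\tau,\infty)$, continuously differentiable on $[0,\infty)$) of $\dot x_i(t)=\sum_{j\ne i}a_{ij}(t)(x_j(t-\tau)-x_i(t-\sigma))$ for $t>0$, with $a_{ij}(t)=\frac1{N-1}\psi(|x_i(t-\sigma)-x_j(t-\tau)|)$ for all $i,j\in[N]$, and $x_i=x_i^0$ on $[-\tau,0]$. $d_x(t):=\max_{i,j\in[N]}|x_i(t)-x_j(t)|$. *)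

theory Defs
  imports "HOL-Analysis.Analysis"
begin

definition comm_weight ::
  "(real \<Rightarrow> real) \<Rightarrow> nat \<Rightarrow> real \<Rightarrow> real \<Rightarrow> (nat \<Rightarrow> real \<Rightarrow> 'a::real_normed_vector)
   \<Rightarrow> nat \<Rightarrow> nat \<Rightarrow> real \<Rightarrow> real" where
  "comm_weight \<psi> N \<sigma> \<tau> x i j t = \<psi> (norm (x i (t - \<sigma>) - x j (t - \<tau>))) / real (N - 1)"

definition min_weight ::
  "(real \<Rightarrow> real) \<Rightarrow> nat \<Rightarrow> real \<Rightarrow> real \<Rightarrow> (nat \<Rightarrow> real \<Rightarrow> 'a::real_normed_vector)
   \<Rightarrow> real \<Rightarrow> real" where
  "min_weight \<psi> N \<sigma> \<tau> x t =
     Min ((\<lambda>(i, j). comm_weight \<psi> N \<sigma> \<tau> x i j t) ` ({1..N} \<times> {1..N}))"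

definition diam_x :: "nat \<Rightarrow> (nat \<Rightarrow> real \<Rightarrow> 'a::real_normed_vector) \<Rightarrow> real \<Rightarrow> real" where
  "diam_x N x t = Max ((\<lambda>(i, j). norm (x i t - x j t)) ` ({1..N} \<times> {1..N}))"

text \<open>The Lyapunov-type functional F(t); x' i is the derivative of x i.\<close>
definition F_fun ::
  "real \<Rightarrow> real \<Rightarrow> nat \<Rightarrow> (nat \<Rightarrow> real \<Rightarrow> 'a::real_normed_vector) \<Rightarrow> (nat \<Rightarrow> real \<Rightarrow> 'a)
   \<Rightarrow> real \<Rightarrow> real" where
  "F_fun \<beta> \<tau> N x x' t = diam_x N x t +
     \<beta> * integral {max 0 (t - 2 * \<tau>)..t}
        (\<lambda>s. exp (- (t - s)) * integral {s..t} (\<lambda>r. Max ((\<lambda>i. norm (x' i r)) ` {1..N})))"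

end

theory Submission
  imports Defs
begin

(* Write m(r) = max_i |x_i'(r)| and M(t) = int_0^t m, so that every x_i moves by at most
   M b - M a on [a, b].  The diameter d_x is the maximum of the finitely many functions
   |x_i - x_j|; off a countable set (isolated zeros, with nonzero derivative, of these
   functions and of their pairwise differences) it is differentiable with the derivative
   of any maximising pair.  For such a pair, replacing the delayed states in the equations
   of x_i and x_j by the current ones costs at most 4 (M t - M (t - tau)), while the
   undelayed consensus terms contract the pair at rate at least N a(t) d_x, because every
   x_k lies between x_j and x_i in the direction x_i - x_j.  The memory term of F is
   smooth for t > 2 tau, and its derivative contains m(t) <= d_x(t - tau) + M t - M (t - tau).
   Integrating the same bound gives
   M t - M (t - tau) <= int_{t-tau}^t F(s - tau) ds + tau (M t - M (t - 2 tau)),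
   and the hypothesis on beta makes the remaining multiple of M t - M (t - 2 tau) nonpositive. *)

lemma discrete_imp_countable:
  fixes S :: "'a::second_countable_topology set"
  assumes "discrete S"
  shows "countable S"
proof -
  obtain \<B> :: "'a set set" where "countable \<B>"
    and basis: "\<And>T. open T \<Longrightarrow> \<exists>\<U>\<subseteq>\<B>. T = \<Union>\<U>"
    using univ_second_countable by metis
  have "\<exists>C\<in>\<B>. C \<inter> S = {s}" if s: "s \<in> S" for s
  proof -
    obtain T where "open T" "T \<inter> S = {s}"
      using discreteD[OF assms s] by (metis isolated_inE)
    moreover obtain \<U> where "\<U> \<subseteq> \<B>" "T = \<Union>\<U>"
      using basis[OF \<open>open T\<close>] by blast
    ultimately show ?thesis using s by blast
  qed
  then obtain f where f: "\<And>s. s \<in> S \<Longrightarrow> f s \<in> \<B> \<and> f s \<inter> S = {s}"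
    by metis
  then have "countable (f ` S)"
    by (blast intro: countable_subset[OF _ \<open>countable \<B>\<close>])
  moreover have "inj_on f S"
    using f by (metis inj_onI singleton_inject)
  ultimately show ?thesis
    by (rule countable_image_inj_on)
qed

lemma countable_zeros_with_nonzero_derivative:
  fixes h :: "real \<Rightarrow> 'a::real_normed_vector"
  shows "countable {t. h t = 0 \<and> (\<exists>v. v \<noteq> 0 \<and> (h has_vector_derivative v) (at t))}"
    (is "countable ?Z")
proof (rule discrete_imp_countable, rule discreteI)
  fix t assume "t \<in> ?Z"
  then obtain v where "h t = 0" "v \<noteq> 0" and v: "(h has_vector_derivative v) (at t)"
    by blast
  have "norm v / 2 > 0" using \<open>v \<noteq> 0\<close> by simp
  then obtain e where "e > 0"
    and e: "\<And>s. norm (s - t) < e \<Longrightarrow> norm (h s - h t - (s - t) *\<^sub>R v) \<le> norm v / 2 * norm (s - t)"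
    using v unfolding has_vector_derivative_def has_derivative_at_alt by meson
  have "s = t" if "s \<in> ?Z" "dist s t < e" for s
  proof (rule ccontr)
    assume "s \<noteq> t"
    have "\<bar>s - t\<bar> * norm v \<le> norm v / 2 * \<bar>s - t\<bar>"
      using e[of s] that \<open>h t = 0\<close> by (simp add: dist_real_def)
    then show False using \<open>s \<noteq> t\<close> \<open>v \<noteq> 0\<close> by simp
  qed
  then show "t isolated_in ?Z"
    using \<open>t \<in> ?Z\<close> \<open>e > 0\<close> by (auto simp: isolated_in_dist_Ex_iff dist_commute)
qed

lemma has_real_derivative_norm:
  fixes h :: "real \<Rightarrow> 'a::real_inner"
  assumes h: "(h has_vector_derivative v) (at t)" and zero: "h t = 0 \<Longrightarrow> v = 0"
  shows "((\<lambda>s. norm (h s)) has_real_derivative inner (sgn (h t)) v) (at t)"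
proof (cases "h t = 0")
  case False
  have "((\<lambda>s. norm (h s)) has_derivative (\<lambda>r. inner (r *\<^sub>R v) (sgn (h t)))) (at t)"
    using has_derivative_compose[OF h[unfolded has_vector_derivative_def] has_derivative_norm[OF False]] .
  moreover have "(\<lambda>r. inner (r *\<^sub>R v) (sgn (h t))) = (*) (inner (sgn (h t)) v)"
    by (auto simp: inner_commute)
  ultimately show ?thesis by (simp add: has_field_derivative_def)
next
  case True
  then have "\<forall>e>0. \<exists>d>0. \<forall>s. norm (s - t) < d \<longrightarrow> norm (h s - h t - (s - t) *\<^sub>R 0) \<le> e * norm (s - t)"
    using h zero unfolding has_vector_derivative_def has_derivative_at_alt by blast
  then have "((\<lambda>s. norm (h s)) has_derivative (\<lambda>_. 0)) (at t)"
    using True by (simp add: has_derivative_at_alt bounded_linear_zero)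
  then show ?thesis using True by (simp add: has_field_derivative_def mult_zero_left[abs_def])
qed

lemma eventually_Max_attained_by_active:
  fixes f :: "'k \<Rightarrow> 'a::t2_space \<Rightarrow> real"
  assumes "finite I" "k0 \<in> I"
    and cont: "\<And>k. k \<in> I \<Longrightarrow> isCont (f k) t"
    and active: "f k0 t = Max ((\<lambda>k. f k t) ` I)"
  shows "\<forall>\<^sub>F s in at t. \<exists>k\<in>I. f k t = Max ((\<lambda>k. f k t) ` I) \<and> Max ((\<lambda>k. f k s) ` I) = f k s"
proof -
  define A where "A = {k\<in>I. f k t = Max ((\<lambda>k. f k t) ` I)}"
  have "\<forall>\<^sub>F s in at t. \<forall>k\<in>I - A. f k s < f k0 s"
  proof (intro eventually_ball_finite ballI)
    fix k assume k: "k \<in> I - A"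
    then have "f k t < f k0 t"
      using active assms(1) by (auto simp: A_def order.strict_iff_order)
    moreover have "((\<lambda>s. f k0 s - f k s) \<longlongrightarrow> f k0 t - f k t) (at t)"
      using cont[of k0] cont[of k] k assms(2) by (intro tendsto_diff) (auto simp: isCont_def)
    ultimately have "\<forall>\<^sub>F s in at t. f k0 s - f k s > 0"
      by (intro order_tendstoD(1)) auto
    then show "\<forall>\<^sub>F s in at t. f k s < f k0 s"
      by eventually_elim simp
  qed (use assms(1) in simp)
  then show ?thesis
  proof eventually_elim
    case (elim s)
    have "Max ((\<lambda>k. f k s) ` I) \<in> (\<lambda>k. f k s) ` I"
      using assms(1,2) by (intro Max_in) auto
    then obtain k where k: "k \<in> I" "Max ((\<lambda>k. f k s) ` I) = f k s"
      by auto
    moreover have "f k0 s \<le> Max ((\<lambda>k. f k s) ` I)"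
      using assms(1,2) by (intro Max_ge) auto
    ultimately have "\<not> f k s < f k0 s"
      by simp
    then have "k \<in> A"
      using elim k(1) by blast
    with k show ?case
      by (auto simp: A_def)
  qed
qed

lemma Max_has_real_derivative:
  fixes f :: "'k \<Rightarrow> real \<Rightarrow> real"
  assumes "finite I" "k0 \<in> I"
    and cont: "\<And>k. k \<in> I \<Longrightarrow> isCont (f k) t"
    and active: "f k0 t = Max ((\<lambda>k. f k t) ` I)"
    and deriv: "\<And>k. k \<in> I \<Longrightarrow> f k t = Max ((\<lambda>k. f k t) ` I) \<Longrightarrow> (f k has_real_derivative D) (at t)"
  shows "((\<lambda>s. Max ((\<lambda>k. f k s) ` I)) has_real_derivative D) (at t)"
proof -
  define g where "g s = Max ((\<lambda>k. f k s) ` I)" for s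
  define A where "A = {k\<in>I. f k t = g t}"
  have "\<forall>\<^sub>F s in at t. \<exists>k\<in>I. f k t = Max ((\<lambda>k. f k t) ` I) \<and> Max ((\<lambda>k. f k s) ` I) = f k s"
    using assms(1,2) cont active by (rule eventually_Max_attained_by_active)
  then have "\<forall>\<^sub>F s in at t. norm ((g s - g t) / (s - t) - D) \<le> (\<Sum>k\<in>A. \<bar>(f k s - f k t) / (s - t) - D\<bar>)"
  proof eventually_elim
    case (elim s)
    then obtain k where k: "k \<in> A" "g s = f k s"
      by (auto simp: A_def g_def)
    then have "norm ((g s - g t) / (s - t) - D) = \<bar>(f k s - f k t) / (s - t) - D\<bar>"
      by (simp add: A_def)
    also have "\<dots> \<le> (\<Sum>k\<in>A. \<bar>(f k s - f k t) / (s - t) - D\<bar>)"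
      using assms(1) k(1) by (intro member_le_sum) (auto simp: A_def)
    finally show ?case .
  qed
  moreover have "((\<lambda>s. \<Sum>k\<in>A. \<bar>(f k s - f k t) / (s - t) - D\<bar>) \<longlongrightarrow> 0) (at t)"
  proof (intro tendsto_null_sum tendsto_rabs_zero)
    fix k assume "k \<in> A"
    then have "(f k has_real_derivative D) (at t)"
      using deriv by (auto simp: A_def g_def)
    then show "((\<lambda>s. (f k s - f k t) / (s - t) - D) \<longlongrightarrow> 0) (at t)"
      by (simp add: has_field_derivative_iff LIM_zero)
  qed
  ultimately have "((\<lambda>s. (g s - g t) / (s - t) - D) \<longlongrightarrow> 0) (at t)"
    by (rule Lim_null_comparison)
  then show ?thesis
    unfolding g_def[symmetric] by (simp add: has_field_derivative_iff LIM_zero_iff)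
qed

lemma Max_has_real_derivative_off_countable:
  fixes f f' :: "'k \<Rightarrow> real \<Rightarrow> real"
  assumes "finite I"
    and deriv: "\<And>k t. k \<in> I \<Longrightarrow> t \<in> S \<Longrightarrow> (f k has_real_derivative f' k t) (at t)"
  obtains E where "countable E"
    and "\<And>k t. t \<in> S - E \<Longrightarrow> k \<in> I \<Longrightarrow> f k t = Max ((\<lambda>k. f k t) ` I) \<Longrightarrow>
           ((\<lambda>s. Max ((\<lambda>k. f k s) ` I)) has_real_derivative f' k t) (at t)"
proof
  define E where "E = (\<Union>k\<in>I. \<Union>l\<in>I. {t. f k t - f l t = 0 \<and>
         (\<exists>v. v \<noteq> 0 \<and> ((\<lambda>s. f k s - f l s) has_vector_derivative v) (at t))})"
  show "countable E"
    unfolding E_def using \<open>finite I\<close>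
    by (intro countable_UN countable_finite countable_zeros_with_nonzero_derivative)
  fix k t
  assume t: "t \<in> S - E" and k: "k \<in> I" and active: "f k t = Max ((\<lambda>k. f k t) ` I)"
  show "((\<lambda>s. Max ((\<lambda>k. f k s) ` I)) has_real_derivative f' k t) (at t)"
  proof (rule Max_has_real_derivative[OF \<open>finite I\<close> k])
    show "isCont (f l) t" if "l \<in> I" for l
      using deriv[OF that] t by (auto intro: DERIV_isCont)
    show "f k t = Max ((\<lambda>k. f k t) ` I)"
      by (rule active)
  next
    fix l assume l: "l \<in> I" "f l t = Max ((\<lambda>k. f k t) ` I)"
    have "((\<lambda>s. f l s - f k s) has_vector_derivative f' l t - f' k t) (at t)"
      using deriv[OF l(1)] deriv[OF k] t
      by (simp add: DERIV_diff flip: has_real_derivative_iff_has_vector_derivative)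
    moreover have "t \<notin> {t. f l t - f k t = 0 \<and>
        (\<exists>v. v \<noteq> 0 \<and> ((\<lambda>s. f l s - f k s) has_vector_derivative v) (at t))}"
      using t k l(1) unfolding E_def by blast
    ultimately have "f' l t = f' k t"
      using l(2) active by (auto dest: spec[of _ "f' l t - f' k t"])
    then show "(f l has_real_derivative f' k t) (at t)"
      using deriv[of l t] l(1) t by simp
  qed
qed

lemma Max_norm_has_real_derivative_off_countable:
  fixes h h' :: "'k \<Rightarrow> real \<Rightarrow> 'a::real_inner"
  assumes "finite I"
    and deriv: "\<And>k t. k \<in> I \<Longrightarrow> t \<in> S \<Longrightarrow> (h k has_vector_derivative h' k t) (at t)"
  obtains E where "countable E"
    and "\<And>k t. t \<in> S - E \<Longrightarrow> k \<in> I \<Longrightarrow> norm (h k t) = Max ((\<lambda>k. norm (h k t)) ` I) \<Longrightarrow>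
           ((\<lambda>s. Max ((\<lambda>k. norm (h k s)) ` I)) has_real_derivative inner (sgn (h k t)) (h' k t)) (at t)"
proof -
  define Z where "Z = (\<Union>k\<in>I. {t. h k t = 0 \<and> (\<exists>v. v \<noteq> 0 \<and> (h k has_vector_derivative v) (at t))})"
  have "countable Z"
    unfolding Z_def using \<open>finite I\<close>
    by (intro countable_UN countable_finite countable_zeros_with_nonzero_derivative)
  have "((\<lambda>s. norm (h k s)) has_real_derivative inner (sgn (h k t)) (h' k t)) (at t)"
    if "k \<in> I" "t \<in> S - Z" for k t
    using that deriv[of k t] by (intro has_real_derivative_norm) (auto simp: Z_def)
  with \<open>finite I\<close> obtain E where "countable E"
    and E: "\<And>k t. t \<in> (S - Z) - E \<Longrightarrow> k \<in> I \<Longrightarrow> norm (h k t) = Max ((\<lambda>k. norm (h k t)) ` I) \<Longrightarrow>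
      ((\<lambda>s. Max ((\<lambda>k. norm (h k s)) ` I)) has_real_derivative inner (sgn (h k t)) (h' k t)) (at t)"
    by (rule Max_has_real_derivative_off_countable) blast+
  show thesis
  proof (rule that[of "Z \<union> E"])
    show "countable (Z \<union> E)"
      using \<open>countable Z\<close> \<open>countable E\<close> by simp
  qed (use E in auto)
qed

lemma continuous_on_Max:
  fixes f :: "'k \<Rightarrow> 'a::topological_space \<Rightarrow> 'b::linorder_topology"
  assumes "finite I" "I \<noteq> {}" "\<And>k. k \<in> I \<Longrightarrow> continuous_on S (f k)"
  shows "continuous_on S (\<lambda>s. Max ((\<lambda>k. f k s) ` I))"
  using assms
proof (induction I rule: finite_ne_induct)
  case (insert k I)
  then show ?case
    by (simp add: continuous_on_max)
qed simp

lemma integral_upper_has_real_derivative: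
  assumes "continuous_on {c..b} g" "c < t" "t < b"
  shows "((\<lambda>u. integral {c..u} g) has_real_derivative g t) (at t)"
proof -
  have "((\<lambda>u. integral {c..u} g) has_real_derivative g t) (at t within {c..b})"
    using assms by (intro integral_has_real_derivative) auto
  then have "((\<lambda>u. integral {c..u} g) has_real_derivative g t) (at t within {c<..<b})"
    by (rule DERIV_subset) auto
  moreover have "at t within {c<..<b} = at t"
    using assms(2,3) by (intro at_within_open) auto
  ultimately show ?thesis
    by simp
qed

lemma integral_nonneg_unconditional:
  fixes f :: "'a::euclidean_space \<Rightarrow> real"
  assumes "\<And>s. s \<in> S \<Longrightarrow> 0 \<le> f s"
  shows "0 \<le> integral S f"
  using assms integral_nonneg[of f S] by (cases "f integrable_on S") (auto simp: not_integrable_integral)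

lemma norm_sum_scaleR_le:
  fixes v :: "'k \<Rightarrow> 'a::real_normed_vector"
  assumes "\<And>k. k \<in> K \<Longrightarrow> 0 \<le> w k" "\<And>k. k \<in> K \<Longrightarrow> norm (v k) \<le> B" "sum w K \<le> 1" "0 \<le> B"
  shows "norm (\<Sum>k\<in>K. w k *\<^sub>R v k) \<le> B"
proof -
  have "norm (\<Sum>k\<in>K. w k *\<^sub>R v k) \<le> (\<Sum>k\<in>K. norm (w k *\<^sub>R v k))"
    by (rule norm_sum)
  also have "\<dots> \<le> (\<Sum>k\<in>K. w k * B)"
    using assms(1,2) by (intro sum_mono) (simp add: mult_left_mono)
  also have "\<dots> = sum w K * B"
    by (simp add: sum_distrib_right)
  also have "\<dots> \<le> B"
    using assms(1,3,4) by (simp add: mult_left_le_one_le sum_nonneg)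
  finally show ?thesis .
qed

lemma inner_diff_nonpos_if_norm_le:
  fixes a b y :: "'a::real_inner"
  assumes "norm (y - b) \<le> norm (a - b)"
  shows "inner (a - b) (y - a) \<le> 0"
proof -
  have "inner (a - b) (y - b) \<le> norm (a - b) * norm (y - b)"
    by (rule norm_cauchy_schwarz)
  also have "\<dots> \<le> norm (a - b) * norm (a - b)"
    using assms by (simp add: mult_left_mono)
  also have "\<dots> = inner (a - b) (a - b)"
    by (simp flip: power2_norm_eq_inner add: power2_eq_square)
  finally show ?thesis
    by (simp add: inner_diff_right)
qed

lemma inner_consensus_diameter_le:
  fixes y :: "'k \<Rightarrow> 'a::real_inner" and w :: "'k \<Rightarrow> 'k \<Rightarrow> real"
  assumes "finite K" "i \<in> K" "j \<in> K"
    and diam: "\<And>k l. k \<in> K \<Longrightarrow> l \<in> K \<Longrightarrow> norm (y k - y l) \<le> norm (y i - y j)"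
    and w: "\<And>k l. k \<in> K \<Longrightarrow> l \<in> K \<Longrightarrow> a \<le> w k l"
  shows "inner (y i - y j) ((\<Sum>k\<in>K - {i}. w i k *\<^sub>R (y k - y i)) - (\<Sum>k\<in>K - {j}. w j k *\<^sub>R (y k - y j)))
           \<le> - a * real (card K) * (norm (y i - y j))\<^sup>2"
proof -
  define u where "u = y i - y j"
  have to_i: "inner u (y k - y i) \<le> 0" if "k \<in> K" for k
    unfolding u_def using that assms(2,3) by (intro inner_diff_nonpos_if_norm_le diam)
  have from_j: "0 \<le> inner u (y k - y j)" if "k \<in> K" for k
  proof -
    have "inner (y j - y i) (y k - y j) \<le> 0"
      using diam[of k i] that assms(2) by (intro inner_diff_nonpos_if_norm_le) (simp add: norm_minus_commute)
    then show ?thesis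
      unfolding u_def by (metis inner_minus_left minus_diff_eq neg_0_le_iff_le)
  qed
  have "(\<Sum>k\<in>K - {i}. w i k * inner u (y k - y i)) \<le> (\<Sum>k\<in>K - {i}. a * inner u (y k - y i))"
    using to_i w assms(2) by (intro sum_mono mult_right_mono_neg) auto
  also have "\<dots> = a * (\<Sum>k\<in>K. inner u (y k - y i))"
    using assms(1,2) by (simp add: sum_diff1 sum_distrib_left)
  finally have sum_i: "(\<Sum>k\<in>K - {i}. w i k * inner u (y k - y i)) \<le> a * (\<Sum>k\<in>K. inner u (y k - y i))" .
  have "a * (\<Sum>k\<in>K. inner u (y k - y j)) = (\<Sum>k\<in>K - {j}. a * inner u (y k - y j))"
    using assms(1,3) by (simp add: sum_diff1 sum_distrib_left)
  also have "\<dots> \<le> (\<Sum>k\<in>K - {j}. w j k * inner u (y k - y j))"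
    using from_j w assms(3) by (intro sum_mono mult_right_mono) auto
  finally have sum_j: "a * (\<Sum>k\<in>K. inner u (y k - y j)) \<le> (\<Sum>k\<in>K - {j}. w j k * inner u (y k - y j))" .
  have "(\<Sum>k\<in>K. inner u (y k - y i)) - (\<Sum>k\<in>K. inner u (y k - y j)) = (\<Sum>k\<in>K. - inner u u)"
    unfolding sum_subtractf[symmetric] by (rule sum.cong) (simp_all add: u_def inner_diff_right)
  then have sum_diff: "(\<Sum>k\<in>K. inner u (y k - y i)) - (\<Sum>k\<in>K. inner u (y k - y j)) = - real (card K) * inner u u"
    by simp
  have "inner u ((\<Sum>k\<in>K - {i}. w i k *\<^sub>R (y k - y i)) - (\<Sum>k\<in>K - {j}. w j k *\<^sub>R (y k - y j)))
      = (\<Sum>k\<in>K - {i}. w i k * inner u (y k - y i)) - (\<Sum>k\<in>K - {j}. w j k * inner u (y k - y j))"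
    by (simp add: inner_diff_right inner_sum_right)
  also have "\<dots> \<le> a * (\<Sum>k\<in>K. inner u (y k - y i)) - a * (\<Sum>k\<in>K. inner u (y k - y j))"
    using sum_i sum_j by linarith
  also have "\<dots> = a * ((\<Sum>k\<in>K. inner u (y k - y i)) - (\<Sum>k\<in>K. inner u (y k - y j)))"
    by (simp only: right_diff_distrib)
  also have "\<dots> = - a * real (card K) * (norm u)\<^sup>2"
    unfolding sum_diff power2_norm_eq_inner by (simp only: mult_minus_left mult_minus_right mult.assoc)
  finally show ?thesis
    unfolding u_def .
qed

locale delayed_consensus =
  fixes N :: nat and \<sigma> \<tau> :: real and \<psi> :: "real \<Rightarrow> real"
    and x x' :: "nat \<Rightarrow> real \<Rightarrow> 'a::{real_inner,banach}"
  assumes N_ge_2: "N \<ge> 2"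
    and delays: "0 \<le> \<sigma>" "\<sigma> \<le> \<tau>"
    and psi_nonneg: "\<And>r. 0 \<le> r \<Longrightarrow> 0 \<le> \<psi> r"
    and psi_le_1: "\<And>r. 0 \<le> r \<Longrightarrow> \<psi> r \<le> 1"
    and x_deriv: "\<And>i t. i \<in> {1..N} \<Longrightarrow> 0 \<le> t \<Longrightarrow> (x i has_vector_derivative x' i t) (at t within {0..})"
    and x'_cont: "\<And>i. i \<in> {1..N} \<Longrightarrow> continuous_on {0..} (x' i)"
    and ode: "\<And>i t. i \<in> {1..N} \<Longrightarrow> 0 < t \<Longrightarrow>
      x' i t = (\<Sum>j\<in>{1..N} - {i}. comm_weight \<psi> N \<sigma> \<tau> x i j t *\<^sub>R (x j (t - \<tau>) - x i (t - \<sigma>)))"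
begin

abbreviation diam :: "real \<Rightarrow> real" where
  "diam \<equiv> diam_x N x"

abbreviation weight :: "nat \<Rightarrow> nat \<Rightarrow> real \<Rightarrow> real" where
  "weight i j t \<equiv> comm_weight \<psi> N \<sigma> \<tau> x i j t"

abbreviation weight_min :: "real \<Rightarrow> real" where
  "weight_min t \<equiv> min_weight \<psi> N \<sigma> \<tau> x t"

definition max_speed :: "real \<Rightarrow> real" where
  "max_speed r = Max ((\<lambda>i. norm (x' i r)) ` {1..N})"

definition travel :: "real \<Rightarrow> real" where
  "travel t = integral {0..t} max_speed"

definition memory :: "real \<Rightarrow> real" where
  "memory t = integral {max 0 (t - 2 * \<tau>)..t} (\<lambda>s. exp (- (t - s)) * integral {s..t} max_speed)"

lemma F_fun_eq: "F_fun \<beta> \<tau> N x x' = (\<lambda>t. diam t + \<beta> * memory t)"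
  unfolding F_fun_def memory_def max_speed_def ..

lemma tau_nonneg: "0 \<le> \<tau>"
  using delays by linarith

lemma max_speed_ge: "i \<in> {1..N} \<Longrightarrow> norm (x' i r) \<le> max_speed r"
  unfolding max_speed_def by (intro Max_ge) auto

lemma max_speed_nonneg: "0 \<le> max_speed r"
  using max_speed_ge[of 1 r] N_ge_2 norm_ge_zero[of "x' 1 r"] by (simp del: norm_ge_zero)

lemma continuous_on_max_speed: "continuous_on {0..} max_speed"
  unfolding max_speed_def[abs_def] using N_ge_2 x'_cont
  by (intro continuous_on_Max continuous_on_norm) auto

lemma max_speed_integrable: "0 \<le> a \<Longrightarrow> max_speed integrable_on {a..b}"
  by (intro integrable_continuous_interval continuous_on_subset[OF continuous_on_max_speed]) auto

lemma integral_max_speed: "0 \<le> a \<Longrightarrow> a \<le> b \<Longrightarrow> integral {a..b} max_speed = travel b - travel a"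
  using Henstock_Kurzweil_Integration.integral_combine[of 0 a b max_speed] max_speed_integrable[of 0 b]
  by (simp add: travel_def)

lemma travel_mono: "0 \<le> a \<Longrightarrow> a \<le> b \<Longrightarrow> travel a \<le> travel b"
  using integral_max_speed[of a b] integral_nonneg[OF max_speed_integrable, of a b] max_speed_nonneg
  by simp

lemma travel_has_derivative: "0 < t \<Longrightarrow> (travel has_real_derivative max_speed t) (at t)"
  unfolding travel_def[abs_def]
  by (rule integral_upper_has_real_derivative[where b = "t + 1",
        OF continuous_on_subset[OF continuous_on_max_speed]]) auto

lemma continuous_on_travel: "continuous_on {0..T} travel"
  unfolding travel_def[abs_def] by (intro indefinite_integral_continuous_1 max_speed_integrable) simp

lemma norm_increment_le_travel:
  assumes "i \<in> {1..N}" "0 \<le> a" "a \<le> b"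
  shows "norm (x i b - x i a) \<le> travel b - travel a"
proof -
  have "(x' i has_integral (x i b - x i a)) {a..b}"
    using assms
    by (intro fundamental_theorem_of_calculus has_vector_derivative_within_subset[OF x_deriv]) auto
  then have "norm (x i b - x i a) = norm (integral {a..b} (x' i))" and "x' i integrable_on {a..b}"
    by (auto simp: integral_unique has_integral_integrable)
  then have "norm (x i b - x i a) \<le> integral {a..b} max_speed"
    using assms max_speed_ge max_speed_integrable by (auto intro: integral_norm_bound_integral)
  then show ?thesis
    using assms by (simp add: integral_max_speed)
qed

lemma x_has_derivative:
  assumes "i \<in> {1..N}" "0 < t"
  shows "(x i has_vector_derivative x' i t) (at t)"
proof -
  have "(x i has_vector_derivative x' i t) (at t within {0<..})"
    using assms by (intro has_vector_derivative_within_subset[OF x_deriv]) auto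
  then show ?thesis
    using assms(2) by (simp add: at_within_open[of t "{0<..}"])
qed

lemma continuous_on_x: "i \<in> {1..N} \<Longrightarrow> continuous_on {0..} (x i)"
  using x_deriv by (auto simp: continuous_on_eq_continuous_within intro: has_vector_derivative_continuous)

lemma norm_le_diam: "i \<in> {1..N} \<Longrightarrow> j \<in> {1..N} \<Longrightarrow> norm (x i t - x j t) \<le> diam t"
  unfolding diam_x_def by (intro Max_ge) force+

lemma diam_nonneg: "0 \<le> diam t"
  using norm_le_diam[of 1 1 t] N_ge_2 by simp

lemma continuous_on_diam: "continuous_on {0..} diam"
  unfolding diam_x_def[abs_def] case_prod_beta using N_ge_2
  by (intro continuous_on_Max continuous_on_norm continuous_on_diff continuous_on_x) (auto simp: mem_Times_iff)

lemma weight_nonneg: "0 \<le> weight i j t"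
  unfolding comm_weight_def by (simp add: psi_nonneg)

lemma weight_le: "weight i j t \<le> 1 / real (N - 1)"
  unfolding comm_weight_def using psi_le_1 N_ge_2 by (simp add: divide_right_mono)

lemma sum_weight_le_1: "i \<in> {1..N} \<Longrightarrow> (\<Sum>j\<in>{1..N} - {i}. weight i j t) \<le> 1"
  using sum_bounded_above[of "{1..N} - {i}" "\<lambda>j. weight i j t", OF weight_le] N_ge_2 by simp

lemma weight_min_le: "i \<in> {1..N} \<Longrightarrow> j \<in> {1..N} \<Longrightarrow> weight_min t \<le> weight i j t"
  unfolding min_weight_def by (intro Min_le) force+

lemma weight_min_nonneg: "0 \<le> weight_min t"
  unfolding min_weight_def using N_ge_2 by (auto simp: weight_nonneg)

lemma weight_min_le_inverse: "real (N - 1) * weight_min t \<le> 1"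
  using order_trans[OF weight_min_le[of 1 1 t] weight_le] N_ge_2 by (simp add: field_simps)

lemma max_speed_le:
  assumes "\<tau> < r"
  shows "max_speed r \<le> diam (r - \<tau>) + (travel r - travel (r - \<tau>))"
proof -
  define B where "B = diam (r - \<tau>) + (travel r - travel (r - \<tau>))"
  have "max_speed r \<in> (\<lambda>i. norm (x' i r)) ` {1..N}"
    unfolding max_speed_def using N_ge_2 by (intro Max_in) auto
  then obtain i where i: "i \<in> {1..N}" "max_speed r = norm (x' i r)"
    by auto
  have "norm (x j (r - \<tau>) - x i (r - \<sigma>)) \<le> B" if j: "j \<in> {1..N}" for j
  proof -
    have "norm (x j (r - \<tau>) - x i (r - \<sigma>))
        \<le> norm (x j (r - \<tau>) - x i (r - \<tau>)) + norm (x i (r - \<sigma>) - x i (r - \<tau>))"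
      using norm_triangle_ineq4[of "x j (r - \<tau>) - x i (r - \<tau>)" "x i (r - \<sigma>) - x i (r - \<tau>)"] by simp
    also have "\<dots> \<le> diam (r - \<tau>) + (travel (r - \<sigma>) - travel (r - \<tau>))"
      using assms delays i j by (intro add_mono norm_le_diam norm_increment_le_travel) auto
    also have "\<dots> \<le> B"
      using assms delays travel_mono[of "r - \<sigma>" r] by (simp add: B_def)
    finally show ?thesis .
  qed
  moreover have "0 \<le> B"
    using assms tau_nonneg diam_nonneg[of "r - \<tau>"] travel_mono[of "r - \<tau>" r] by (simp add: B_def)
  ultimately have "norm (\<Sum>j\<in>{1..N} - {i}. weight i j r *\<^sub>R (x j (r - \<tau>) - x i (r - \<sigma>))) \<le> B"
    using i(1) by (intro norm_sum_scaleR_le weight_nonneg sum_weight_le_1) auto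
  moreover have "0 < r"
    using assms tau_nonneg by linarith
  ultimately show ?thesis
    using i ode[OF i(1)] by (simp add: B_def)
qed

lemma velocity_delay_error:
  assumes "l \<in> {1..N}" "\<tau> \<le> t" "0 < t"
  shows "norm (x' l t - (\<Sum>k\<in>{1..N} - {l}. weight l k t *\<^sub>R (x k t - x l t)))
           \<le> 2 * (travel t - travel (t - \<tau>))"
proof -
  have "x' l t - (\<Sum>k\<in>{1..N} - {l}. weight l k t *\<^sub>R (x k t - x l t))
      = (\<Sum>k\<in>{1..N} - {l}. weight l k t *\<^sub>R ((x l t - x l (t - \<sigma>)) - (x k t - x k (t - \<tau>))))"
    unfolding ode[OF assms(1,3)] sum_subtractf[symmetric] by (intro sum.cong) (auto simp: algebra_simps)
  also have "norm \<dots> \<le> 2 * (travel t - travel (t - \<tau>))"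
  proof (intro norm_sum_scaleR_le weight_nonneg sum_weight_le_1 assms(1))
    fix k assume k: "k \<in> {1..N} - {l}"
    have "norm ((x l t - x l (t - \<sigma>)) - (x k t - x k (t - \<tau>)))
        \<le> (travel t - travel (t - \<sigma>)) + (travel t - travel (t - \<tau>))"
      using assms k delays
      by (intro order_trans[OF norm_triangle_ineq4] add_mono norm_increment_le_travel) auto
    also have "\<dots> \<le> 2 * (travel t - travel (t - \<tau>))"
      using assms delays travel_mono[of "t - \<tau>" "t - \<sigma>"] by simp
    finally show "norm ((x l t - x l (t - \<sigma>)) - (x k t - x k (t - \<tau>))) \<le> 2 * (travel t - travel (t - \<tau>))" .
  next
    show "0 \<le> 2 * (travel t - travel (t - \<tau>))"
      using assms tau_nonneg travel_mono[of "t - \<tau>" t] by simp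
  qed
  finally show ?thesis .
qed

lemma diam_pair_derivative_le:
  assumes ij: "i \<in> {1..N}" "j \<in> {1..N}" and max: "norm (x i t - x j t) = diam t"
    and t: "\<tau> \<le> t" "0 < t"
  shows "inner (sgn (x i t - x j t)) (x' i t - x' j t)
           \<le> - real (N - 1) * weight_min t * diam t + 4 * (travel t - travel (t - \<tau>))"
proof -
  define u where "u = x i t - x j t"
  define C where "C l = (\<Sum>k\<in>{1..N} - {l}. weight l k t *\<^sub>R (x k t - x l t))" for l
  have "inner u (C i - C j) \<le> - weight_min t * real N * (norm u)\<^sup>2"
    using inner_consensus_diameter_le[of "{1..N}" i j "\<lambda>k. x k t" "weight_min t" "\<lambda>k l. weight k l t"]
      ij max norm_le_diam weight_min_le by (simp add: u_def C_def)
  then have consensus: "inner (sgn u) (C i - C j) \<le> - weight_min t * real N * norm u"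
  proof (cases "u = 0")
    case False
    then have "inner (sgn u) (C i - C j) = inner u (C i - C j) / norm u"
      by (simp add: sgn_div_norm field_simps)
    with False show ?thesis
      using \<open>inner u (C i - C j) \<le> _\<close> by (simp add: pos_divide_le_eq power2_eq_square)
  qed simp
  have "inner (sgn u) ((x' i t - C i) - (x' j t - C j)) \<le> norm (sgn u) * norm ((x' i t - C i) - (x' j t - C j))"
    by (rule norm_cauchy_schwarz)
  also have "\<dots> \<le> 1 * (norm (x' i t - C i) + norm (x' j t - C j))"
    by (intro mult_mono norm_triangle_ineq4) (auto simp: norm_sgn)
  also have "\<dots> \<le> 4 * (travel t - travel (t - \<tau>))"
    using velocity_delay_error[OF ij(1) t] velocity_delay_error[OF ij(2) t] by (simp add: C_def)
  finally have delay: "inner (sgn u) ((x' i t - C i) - (x' j t - C j)) \<le> 4 * (travel t - travel (t - \<tau>))" .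
  have "real (N - 1) * weight_min t * norm u \<le> real N * weight_min t * norm u"
    using weight_min_nonneg by (intro mult_right_mono) auto
  then show ?thesis
    using consensus delay max by (simp add: u_def inner_diff_right algebra_simps)
qed

lemma diam_has_derivative_off_countable:
  obtains E where "countable E"
    and "\<And>t. \<tau> \<le> t \<Longrightarrow> 0 < t \<Longrightarrow> t \<notin> E \<Longrightarrow> \<exists>D. (diam has_real_derivative D) (at t) \<and>
           D \<le> - real (N - 1) * weight_min t * diam t + 4 * (travel t - travel (t - \<tau>))"
proof -
  define P where "P = {1..N} \<times> {1..N}"
  define h where "h p t = x (fst p) t - x (snd p) t" for p t
  define h' where "h' p t = x' (fst p) t - x' (snd p) t" for p t
  have diam_eq: "diam = (\<lambda>t. Max ((\<lambda>p. norm (h p t)) ` P))"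
    by (simp add: fun_eq_iff diam_x_def h_def P_def case_prod_beta)
  have h_deriv: "(h p has_vector_derivative h' p t) (at t)" if "p \<in> P" "t \<in> {0<..}" for p t
    using that unfolding h_def[abs_def] h'_def
    by (intro has_vector_derivative_diff x_has_derivative) (auto simp: P_def mem_Times_iff)
  have "finite P"
    by (simp add: P_def)
  then obtain E where "countable E" and E: "\<And>p t. t \<in> {0<..} - E \<Longrightarrow> p \<in> P \<Longrightarrow>
      norm (h p t) = Max ((\<lambda>p. norm (h p t)) ` P) \<Longrightarrow>
      ((\<lambda>s. Max ((\<lambda>p. norm (h p s)) ` P)) has_real_derivative inner (sgn (h p t)) (h' p t)) (at t)"
    using h_deriv by (rule Max_norm_has_real_derivative_off_countable) blast+
  show thesis
  proof (rule that[OF \<open>countable E\<close>])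
    fix t assume t: "\<tau> \<le> t" "0 < t" "t \<notin> E"
    have "diam t \<in> (\<lambda>p. norm (h p t)) ` P"
      unfolding diam_eq P_def using N_ge_2 by (intro Max_in) auto
    then obtain p where p: "p \<in> P" "norm (h p t) = diam t"
      by auto
    show "\<exists>D. (diam has_real_derivative D) (at t) \<and>
           D \<le> - real (N - 1) * weight_min t * diam t + 4 * (travel t - travel (t - \<tau>))"
      using E[of t p] diam_pair_derivative_le[of "fst p" "snd p" t] p t
      by (auto simp: diam_eq P_def h_def h'_def mem_Times_iff)
  qed
qed

definition weighted_travel :: "real \<Rightarrow> real" where
  "weighted_travel t = integral {0..t} (\<lambda>s. exp s * travel s)"

lemma continuous_on_exp_travel: "continuous_on {0..T} (\<lambda>s. exp s * travel s)"
  by (intro continuous_intros continuous_on_travel)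

lemma integral_exp_travel:
  "0 \<le> a \<Longrightarrow> a \<le> b \<Longrightarrow> integral {a..b} (\<lambda>s. exp s * travel s) = weighted_travel b - weighted_travel a"
  using Henstock_Kurzweil_Integration.integral_combine[of 0 a b "\<lambda>s. exp s * travel s"]
    integrable_continuous_interval[OF continuous_on_exp_travel[of b]]
  by (simp add: weighted_travel_def)

lemma weighted_travel_has_derivative:
  "0 < t \<Longrightarrow> (weighted_travel has_real_derivative exp t * travel t) (at t)"
  unfolding weighted_travel_def[abs_def]
  by (rule integral_upper_has_real_derivative[OF continuous_on_exp_travel[of "t + 1"]]) auto

lemma continuous_on_weighted_travel: "continuous_on {0..T} weighted_travel"
  unfolding weighted_travel_def[abs_def]
  by (intro indefinite_integral_continuous_1 integrable_continuous_interval continuous_on_exp_travel)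

lemma memory_eq:
  assumes "0 \<le> t"
  defines "a \<equiv> max 0 (t - 2 * \<tau>)"
  shows "memory t = (1 - exp (a - t)) * travel t - exp (- t) * (weighted_travel t - weighted_travel a)"
proof -
  have a: "0 \<le> a" "a \<le> t"
    using assms tau_nonneg by (auto simp: a_def)
  have "memory t = integral {a..t} (\<lambda>s. exp (- t) * (exp s * travel t) - exp (- t) * (exp s * travel s))"
    unfolding memory_def a_def[symmetric]
  proof (rule integral_cong)
    fix s assume "s \<in> {a..t}"
    then show "exp (- (t - s)) * integral {s..t} max_speed = exp (- t) * (exp s * travel t) - exp (- t) * (exp s * travel s)"
      using a by (simp add: integral_max_speed exp_diff exp_minus field_simps)
  qed
  also have "\<dots> = exp (- t) * integral {a..t} (\<lambda>s. exp s * travel t) - exp (- t) * integral {a..t} (\<lambda>s. exp s * travel s)"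
  proof -
    have "(\<lambda>s. exp s * travel s) integrable_on {a..t}"
      using a by (intro integrable_continuous_interval continuous_on_subset[OF continuous_on_exp_travel[of t]]) auto
    moreover have "(\<lambda>s. exp s * travel t) integrable_on {a..t}"
      by (intro integrable_continuous_interval continuous_intros)
    ultimately show ?thesis
      by (simp add: integral_diff)
  qed
  also have "\<dots> = exp (- t) * ((exp t - exp a) * travel t) - exp (- t) * (weighted_travel t - weighted_travel a)"
    using a by (simp add: integral_mult_left integral_exp_travel)
  also have "\<dots> = (1 - exp (a - t)) * travel t - exp (- t) * (weighted_travel t - weighted_travel a)"
    by (simp add: exp_diff exp_minus field_simps)
  finally show ?thesis .
qed

lemma memory_nonneg: "0 \<le> memory t"
  unfolding memory_def using max_speed_nonneg
  by (intro integral_nonneg_unconditional mult_nonneg_nonneg integral_nonneg_unconditional) auto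

lemma continuous_on_memory: "continuous_on {0..T} memory"
proof -
  define a where "a t = max 0 (t - 2 * \<tau>)" for t
  have "a ` {0..T} \<subseteq> {0..T}"
    using tau_nonneg by (auto simp: a_def)
  then have "continuous_on {0..T} (\<lambda>t. weighted_travel (a t))"
    by (intro continuous_on_compose2[OF continuous_on_weighted_travel]) (auto simp: a_def intro!: continuous_intros)
  then have "continuous_on {0..T} (\<lambda>t. (1 - exp (a t - t)) * travel t - exp (- t) * (weighted_travel t - weighted_travel (a t)))"
    by (intro continuous_intros continuous_on_travel continuous_on_weighted_travel)
      (auto simp: a_def intro!: continuous_intros)
  then show ?thesis
    by (rule continuous_on_eq) (simp add: memory_eq a_def)
qed

lemma memory_has_derivative:
  assumes "2 * \<tau> < t"
  shows "(memory has_real_derivative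
           (1 - exp (- 2 * \<tau>)) * max_speed t - memory t - exp (- 2 * \<tau>) * (travel t - travel (t - 2 * \<tau>))) (at t)"
proof -
  define G where "G s = (1 - exp (- 2 * \<tau>)) * travel s - exp (- s) * (weighted_travel s - weighted_travel (s - 2 * \<tau>))"
    for s
  have memory_G: "memory s = G s" if "s \<in> {2 * \<tau><..}" for s
    using that tau_nonneg by (simp add: memory_eq G_def)
  have t: "0 < t" "0 < t - 2 * \<tau>" "t \<in> {2 * \<tau><..}"
    using assms tau_nonneg by auto
  have shifted: "((\<lambda>s. weighted_travel (s - 2 * \<tau>)) has_real_derivative exp (t - 2 * \<tau>) * travel (t - 2 * \<tau>) * 1) (at t)"
    by (rule DERIV_chain2[of weighted_travel _ "\<lambda>s. s - 2 * \<tau>", OF weighted_travel_has_derivative[OF t(2)]])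
      (auto intro!: derivative_eq_intros)
  have G_deriv: "(G has_real_derivative (1 - exp (- 2 * \<tau>)) * max_speed t
      - (exp (- t) * (exp t * travel t - exp (t - 2 * \<tau>) * travel (t - 2 * \<tau>) * 1)
         + - exp (- t) * (weighted_travel t - weighted_travel (t - 2 * \<tau>)))) (at t)"
    unfolding G_def
    by (intro DERIV_diff DERIV_cmult DERIV_mult' shifted travel_has_derivative[OF t(1)]
        weighted_travel_has_derivative[OF t(1)]) (auto intro!: derivative_eq_intros)
  have exp_cancel: "exp (- t) * (exp t * travel t - exp (t - 2 * \<tau>) * travel (t - 2 * \<tau>) * 1)
      = travel t - exp (- 2 * \<tau>) * travel (t - 2 * \<tau>)"
    by (simp add: right_diff_distrib mult.assoc[symmetric] flip: exp_add)
  have derivative_eq: "(1 - exp (- 2 * \<tau>)) * max_speed t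
      - (exp (- t) * (exp t * travel t - exp (t - 2 * \<tau>) * travel (t - 2 * \<tau>) * 1)
         + - exp (- t) * (weighted_travel t - weighted_travel (t - 2 * \<tau>)))
      = (1 - exp (- 2 * \<tau>)) * max_speed t - memory t - exp (- 2 * \<tau>) * (travel t - travel (t - 2 * \<tau>))"
    unfolding exp_cancel memory_G[OF t(3)] G_def by (simp add: algebra_simps)
  have "(G has_real_derivative
      (1 - exp (- 2 * \<tau>)) * max_speed t - memory t - exp (- 2 * \<tau>) * (travel t - travel (t - 2 * \<tau>))) (at t)"
    using G_deriv derivative_eq by (rule DERIV_cong)
  then show ?thesis
    by (rule has_field_derivative_transform_within_open[where S = "{2 * \<tau><..}"])
      (use assms memory_G in auto)
qed

lemma diam_le_F_fun: "0 \<le> \<beta> \<Longrightarrow> diam t \<le> F_fun \<beta> \<tau> N x x' t"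
  by (simp add: F_fun_eq memory_nonneg)

lemma continuous_on_F_fun: "continuous_on {0..T} (F_fun \<beta> \<tau> N x x')"
  unfolding F_fun_eq
  by (intro continuous_intros continuous_on_memory continuous_on_subset[OF continuous_on_diam]) auto

lemma travel_increment_le:
  assumes "0 \<le> \<beta>" "2 * \<tau> < t"
  shows "travel t - travel (t - \<tau>)
           \<le> integral {t - \<tau>..t} (\<lambda>s. F_fun \<beta> \<tau> N x x' (s - \<tau>)) + \<tau> * (travel t - travel (t - 2 * \<tau>))"
proof -
  define C where "C = travel t - travel (t - 2 * \<tau>)"
  have t: "0 \<le> t - 2 * \<tau>" "0 \<le> t - \<tau>" "t - \<tau> \<le> t"
    using assms tau_nonneg by auto
  have "continuous_on {t - \<tau>..t} (\<lambda>s. F_fun \<beta> \<tau> N x x' (s - \<tau>))"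
    using t by (intro continuous_on_compose2[OF continuous_on_F_fun[of t]] continuous_intros) auto
  then have F_int: "(\<lambda>s. F_fun \<beta> \<tau> N x x' (s - \<tau>)) integrable_on {t - \<tau>..t}"
    by (rule integrable_continuous_interval)
  have "travel t - travel (t - \<tau>) = integral {t - \<tau>..t} max_speed"
    using t by (simp add: integral_max_speed)
  also have "\<dots> \<le> integral {t - \<tau>..t} (\<lambda>s. F_fun \<beta> \<tau> N x x' (s - \<tau>) + C)"
  proof (rule integral_le[OF max_speed_integrable[OF t(2)] integrable_add[OF F_int integrable_const_ivl]])
    fix s assume s: "s \<in> {t - \<tau>..t}"
    have "max_speed s \<le> diam (s - \<tau>) + (travel s - travel (s - \<tau>))"
      using s assms tau_nonneg by (intro max_speed_le) auto
    moreover have "diam (s - \<tau>) \<le> F_fun \<beta> \<tau> N x x' (s - \<tau>)"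
      using assms(1) by (rule diam_le_F_fun)
    moreover have "travel s \<le> travel t" "travel (t - 2 * \<tau>) \<le> travel (s - \<tau>)"
      using s t by (auto intro: travel_mono)
    ultimately show "max_speed s \<le> F_fun \<beta> \<tau> N x x' (s - \<tau>) + C"
      by (simp add: C_def)
  qed
  also have "\<dots> = integral {t - \<tau>..t} (\<lambda>s. F_fun \<beta> \<tau> N x x' (s - \<tau>)) + \<tau> * C"
    using t by (simp add: integral_add[OF F_int integrable_const_ivl])
  finally show ?thesis
    by (simp add: C_def)
qed

lemma F_fun_has_derivative_le:
  assumes \<beta>: "0 < \<beta>" "2 * \<beta> * exp (- 2 * \<tau>) - 4 * \<tau> - \<beta> \<ge> 0" and t: "2 * \<tau> < t"
    and diam_deriv: "(diam has_real_derivative D) (at t)"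
    and diam_le: "D \<le> - real (N - 1) * weight_min t * diam t + 4 * (travel t - travel (t - \<tau>))"
  shows "\<exists>D'. (F_fun \<beta> \<tau> N x x' has_real_derivative D') (at t) \<and>
           D' \<le> 4 * integral {t - \<tau>..t} (\<lambda>s. F_fun \<beta> \<tau> N x x' (s - \<tau>))
                - real (N - 1) * weight_min t * F_fun \<beta> \<tau> N x x' t
                + \<beta> * (1 - exp (- 2 * \<tau>)) * F_fun \<beta> \<tau> N x x' (t - \<tau>)"
proof (intro exI conjI)
  define e where "e = exp (- 2 * \<tau>)"
  define dM1 where "dM1 = travel t - travel (t - \<tau>)"
  define dM2 where "dM2 = travel t - travel (t - 2 * \<tau>)"
  define a where "a = real (N - 1) * weight_min t"
  show "(F_fun \<beta> \<tau> N x x' has_real_derivative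
      D + \<beta> * ((1 - e) * max_speed t - memory t - e * dM2)) (at t)"
    unfolding F_fun_eq e_def dM2_def by (intro DERIV_add DERIV_cmult diam_deriv memory_has_derivative t)
  have D_le: "D \<le> - a * diam t + 4 * dM1"
    using diam_le by (simp add: a_def dM1_def)
  have e: "0 < e" "e \<le> 1"
    using tau_nonneg by (auto simp: e_def)
  have dM: "0 \<le> dM1" "dM1 \<le> dM2"
    using t tau_nonneg travel_mono[of "t - \<tau>" t] travel_mono[of "t - 2 * \<tau>" "t - \<tau>"]
    by (auto simp: dM1_def dM2_def)
  have a: "0 \<le> a" "a \<le> 1"
    using weight_min_nonneg weight_min_le_inverse by (auto simp: a_def)
  have speed: "max_speed t \<le> F_fun \<beta> \<tau> N x x' (t - \<tau>) + dM1"
    using max_speed_le[of t] diam_le_F_fun[of \<beta> "t - \<tau>"] t \<beta>(1) tau_nonneg by (simp add: dM1_def)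
  have increment: "dM1 \<le> integral {t - \<tau>..t} (\<lambda>s. F_fun \<beta> \<tau> N x x' (s - \<tau>)) + \<tau> * dM2"
    unfolding dM1_def dM2_def using \<beta>(1) t by (intro travel_increment_le) auto
  have speed_term: "\<beta> * (1 - e) * max_speed t \<le> \<beta> * (1 - e) * (F_fun \<beta> \<tau> N x x' (t - \<tau>) + dM1)"
    using speed e \<beta> by (intro mult_left_mono) auto
  have memory_term: "a * (\<beta> * memory t) \<le> \<beta> * memory t"
    using a \<beta> memory_nonneg[of t] by (intro mult_left_le_one_le) auto
  have increment_term: "\<beta> * (1 - e) * dM1 \<le> \<beta> * (1 - e) * dM2"
    using dM e \<beta> by (intro mult_left_mono) auto
  \<comment> \<open>the hypothesis on \<beta> makes the net coefficient of dM2 nonpositive\<close>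
  have beta_term: "dM2 * (4 * \<tau> + \<beta> - 2 * \<beta> * e) \<le> 0"
    using dM \<beta> by (intro mult_nonneg_nonpos) (auto simp: e_def)
  show "D + \<beta> * ((1 - e) * max_speed t - memory t - e * dM2)
      \<le> 4 * integral {t - \<tau>..t} (\<lambda>s. F_fun \<beta> \<tau> N x x' (s - \<tau>))
        - real (N - 1) * weight_min t * F_fun \<beta> \<tau> N x x' t
        + \<beta> * (1 - exp (- 2 * \<tau>)) * F_fun \<beta> \<tau> N x x' (t - \<tau>)"
    using D_le increment speed_term memory_term increment_term beta_term
    unfolding a_def[symmetric] e_def[symmetric]
    by (simp add: F_fun_eq algebra_simps)
qed

end

theorem lemma3p4:
  fixes N :: nat and \<sigma> \<tau> \<beta> :: real and \<psi> :: "real \<Rightarrow> real"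
    and x x' :: "nat \<Rightarrow> real \<Rightarrow> 'a::euclidean_space"
  assumes N2: "N \<ge> 2"
    and sig: "0 \<le> \<sigma>" "\<sigma> \<le> \<tau>"
    and psi_cont: "continuous_on {0..} \<psi>"
    and psi_mono: "\<forall>s t. 0 \<le> s \<and> s \<le> t \<longrightarrow> \<psi> t \<le> \<psi> s"
    and psi_pos: "\<forall>r\<ge>0. 0 < \<psi> r"
    and psi_le1: "\<forall>r\<ge>0. \<psi> r \<le> 1"
    and x_cont: "\<forall>i\<in>{1..N}. continuous_on {-\<tau>..} (x i)"
    and x_deriv: "\<forall>i\<in>{1..N}. \<forall>t\<ge>0. (x i has_vector_derivative x' i t) (at t within {0..})"
    and x'_cont: "\<forall>i\<in>{1..N}. continuous_on {0..} (x' i)"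
    and ode: "\<forall>i\<in>{1..N}. \<forall>t>0.
               x' i t = (\<Sum>j\<in>{1..N} - {i}. comm_weight \<psi> N \<sigma> \<tau> x i j t *\<^sub>R (x j (t - \<tau>) - x i (t - \<sigma>)))"
    and beta: "\<beta> > 0" "2 * \<beta> * exp (- 2 * \<tau>) - 4 * \<tau> - \<beta> \<ge> 0"
  shows "AE t in lborel. t > 2 * \<tau> \<longrightarrow>
           (\<exists>D. (F_fun \<beta> \<tau> N x x' has_real_derivative D) (at t) \<and>
                D \<le> 4 * integral {t - \<tau>..t} (\<lambda>s. F_fun \<beta> \<tau> N x x' (s - \<tau>))
                     - real (N - 1) * min_weight \<psi> N \<sigma> \<tau> x t * F_fun \<beta> \<tau> N x x' t
                     + \<beta> * (1 - exp (- 2 * \<tau>)) * F_fun \<beta> \<tau> N x x' (t - \<tau>))"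
proof -
  interpret delayed_consensus N \<sigma> \<tau> \<psi> x x'
    using N2 sig psi_pos psi_le1 x_deriv x'_cont ode by unfold_locales (auto simp: less_imp_le)
  obtain E where "countable E" and diam_deriv: "\<And>t. \<tau> \<le> t \<Longrightarrow> 0 < t \<Longrightarrow> t \<notin> E \<Longrightarrow>
      \<exists>D. (diam has_real_derivative D) (at t) \<and>
        D \<le> - real (N - 1) * weight_min t * diam t + 4 * (travel t - travel (t - \<tau>))"
    using diam_has_derivative_off_countable by blast
  have "\<exists>D. (F_fun \<beta> \<tau> N x x' has_real_derivative D) (at t) \<and>
      D \<le> 4 * integral {t - \<tau>..t} (\<lambda>s. F_fun \<beta> \<tau> N x x' (s - \<tau>))
        - real (N - 1) * weight_min t * F_fun \<beta> \<tau> N x x' t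
        + \<beta> * (1 - exp (- 2 * \<tau>)) * F_fun \<beta> \<tau> N x x' (t - \<tau>)"
    if "t \<notin> E" "2 * \<tau> < t" for t
    using diam_deriv[of t] that tau_nonneg F_fun_has_derivative_le[OF beta that(2)] by auto
  then show ?thesis
    by (intro AE_I'[OF countable_imp_null_set_lborel[OF \<open>countable E\<close>]]) auto
qed

end
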